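(* Let $K\subset\mathbb{R}^n$ be closed and consider $\Sigma:\ \dot x\in F(x),\ x\in C$, satisfying (SA), such that $F(y)\subset T_K(y)$ for all $y\in\partial K\cap\operatorname{int}(C)$. Let $\phi$ be a solution to $\Sigma$ with $\phi(0)=x\in\partial K$ satisfying property $(\star)$ with some $T>0$. Then $\phi([0,T])\subset K$; in particular $\phi$ does not leave $K$ immediately.
   Context: Standing assumption (SA): $C \subset \mathbb{R}^n$ is closed; $F:\mathbb{R}^n \rightrightarrows \mathbb{R}^n$ has $F(x)$ nonempty, closed and convex for all $x \in C$; $F$ is continuous (upper and lower semicontinuous) and one-sided locally Lipschitz: for every nonempty compact $\mathcal{N} \subset \operatorname{dom} F$ there is $k>0$ with $(x_1-x_2)^\top F(x_1) \subset (x_1-x_2)^\top F(x_2) + k|x_1-x_2|^2\mathbb{B}$ for all $x_1,x_2 \in \mathcal{N}$ ($\mathbb{B}$ the closed unit ball). Solutions: $\phi$ is locally absolutely continuous with values in $C$, $\operatorname{dom}\phi=[0,T]$ ($T\ge0$) or $[0,T)$ ($T\in\mathbb{R}_{\ge0}\cup\{+\infty\}$), and $\dot\phi(t)\in F(\phi(t))$ for a.e. $t\in\operatorname{dom}\phi$. A solution $\phi$ with $\phi(0)=x$ leaves $K$ immediately if there is $T>0$ with $\phi((0,T])\subset C\setminus K$. Property $(\star)$ for a solution $\phi$: there exists $T>0$ with $(0,T]\subset\operatorname{dom}\phi$ such that $\operatorname{Proj}_{\partial K}(\phi(t))\cap\operatorname{int}(C)\neq\emptyset$ for all $t\in(0,T]$,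 where $\operatorname{Proj}_{S}(z)$ denotes the set of points of $S$ at minimal Euclidean distance from $z$. Contingent cone: $T_S(x)=\{v: \exists t_i\to 0^+, \exists v_i\to v,\ x+t_iv_i\in S\}$. *)

theory Defs
  imports "HOL-Analysis.Analysis"
begin

definition abs_cont_on :: "real set \<Rightarrow> (real \<Rightarrow> 'a::real_normed_vector) \<Rightarrow> bool" where
  "abs_cont_on I f \<longleftrightarrow>
     (\<forall>\<epsilon>>0. \<exists>\<delta>>0. \<forall>(n::nat) (a::nat \<Rightarrow> real) b.
        (\<forall>i<n. a i \<le> b i \<and> {a i..b i} \<subseteq> I) \<and>
        (\<forall>i<n. \<forall>j<n. i \<noteq> j \<longrightarrow> b i \<le> a j \<or> b j \<le> a i) \<and>
        (\<Sum>i<n. b i - a i) < \<delta>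
        \<longrightarrow> (\<Sum>i<n. norm (f (b i) - f (a i))) < \<epsilon>)"

definition loc_abs_cont_on :: "real set \<Rightarrow> (real \<Rightarrow> 'a::real_normed_vector) \<Rightarrow> bool" where
  "loc_abs_cont_on D f \<longleftrightarrow> (\<forall>a b. {a..b} \<subseteq> D \<longrightarrow> abs_cont_on {a..b} f)"

definition sv_dom :: "('a \<Rightarrow> 'b set) \<Rightarrow> 'a set" where
  "sv_dom F = {x. F x \<noteq> {}}"

definition usc_on :: "'a::metric_space set \<Rightarrow> ('a \<Rightarrow> 'b::topological_space set) \<Rightarrow> bool" where
  "usc_on C F \<longleftrightarrow> (\<forall>x\<in>C. \<forall>U. open U \<and> F x \<subseteq> U \<longrightarrow>
      (\<exists>\<delta>>0. \<forall>y\<in>C. dist y x < \<delta> \<longrightarrow> F y \<subseteq> U))"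

definition lsc_on :: "'a::metric_space set \<Rightarrow> ('a \<Rightarrow> 'b::topological_space set) \<Rightarrow> bool" where
  "lsc_on C F \<longleftrightarrow> (\<forall>x\<in>C. \<forall>U. open U \<and> F x \<inter> U \<noteq> {} \<longrightarrow>
      (\<exists>\<delta>>0. \<forall>y\<in>C. dist y x < \<delta> \<longrightarrow> F y \<inter> U \<noteq> {}))"

definition one_sided_loc_lipschitz :: "('a::euclidean_space \<Rightarrow> 'a set) \<Rightarrow> bool" where
  "one_sided_loc_lipschitz F \<longleftrightarrow>
     (\<forall>N. N \<noteq> {} \<and> compact N \<and> N \<subseteq> sv_dom F \<longrightarrow>
        (\<exists>k>0. \<forall>x1\<in>N. \<forall>x2\<in>N.
           (\<lambda>v. (x1 - x2) \<bullet> v) ` F x1 \<subseteq>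
             {a + b | a b. a \<in> (\<lambda>v. (x1 - x2) \<bullet> v) ` F x2 \<and> \<bar>b\<bar> \<le> k * (norm (x1 - x2))\<^sup>2}))"

definition standing_assumption :: "'a::euclidean_space set \<Rightarrow> ('a \<Rightarrow> 'a set) \<Rightarrow> bool" where
  "standing_assumption C F \<longleftrightarrow>
     closed C \<and>
     (\<forall>x\<in>C. F x \<noteq> {} \<and> closed (F x) \<and> convex (F x)) \<and>
     usc_on C F \<and> lsc_on C F \<and>
     one_sided_loc_lipschitz F"

definition solution_domain :: "real set \<Rightarrow> bool" where
  "solution_domain D \<longleftrightarrow>
     (\<exists>T\<ge>0. D = {0..T}) \<or> (\<exists>T\<ge>0. D = {0..<T}) \<or> D = {0..}"

definition is_solution :: "'a::euclidean_space set \<Rightarrow> ('a \<Rightarrow> 'a set) \<Rightarrow> real set \<Rightarrow> (real \<Rightarrow> 'a) \<Rightarrow> bool" where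
  "is_solution C F D \<phi> \<longleftrightarrow>
     solution_domain D \<and> loc_abs_cont_on D \<phi> \<and> \<phi> ` D \<subseteq> C \<and>
     (\<exists>Z. Z \<in> null_sets lebesgue \<and>
        (\<forall>t\<in>D - Z. \<exists>v\<in>F (\<phi> t). (\<phi> has_vector_derivative v) (at t within D)))"

definition Proj :: "'a::metric_space set \<Rightarrow> 'a \<Rightarrow> 'a set" where
  "Proj S z = {y\<in>S. \<forall>y'\<in>S. dist z y \<le> dist z y'}"

definition contingent_cone :: "'a::real_normed_vector set \<Rightarrow> 'a \<Rightarrow> 'a set" where
  "contingent_cone S x = {v. \<exists>t u. (\<forall>i. t i > 0) \<and> t \<longlonglongrightarrow> 0 \<and> u \<longlonglongrightarrow> v \<and>
                             (\<forall>i. x + t i *\<^sub>R u i \<in> S)}"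

definition star_property_with :: "'a::euclidean_space set \<Rightarrow> 'a set \<Rightarrow> real set \<Rightarrow> (real \<Rightarrow> 'a) \<Rightarrow> real \<Rightarrow> bool" where
  "star_property_with C K D \<phi> T \<longleftrightarrow>
     T > 0 \<and> {0<..T} \<subseteq> D \<and> (\<forall>t\<in>{0<..T}. Proj (frontier K) (\<phi> t) \<inter> interior C \<noteq> {})"

definition leaves_immediately :: "'a set \<Rightarrow> 'a set \<Rightarrow> real set \<Rightarrow> (real \<Rightarrow> 'a) \<Rightarrow> bool" where
  "leaves_immediately C K D \<phi> \<longleftrightarrow> (\<exists>T>0. {0<..T} \<subseteq> D \<and> \<phi> ` {0<..T} \<subseteq> C - K)"

end

theory Submission
  imports Defs
begin

text \<open>Let \<open>g t = (infdist (\<phi> t) K)\<^sup>2\<close>. At almost every \<open>t\<close> with \<open>\<phi> t \<notin> K\<close>, property (\<open>\<star>\<close>)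
  provides a nearest point \<open>y\<close> of \<open>K\<close> lying on \<open>frontier K \<inter> interior C\<close>. Tangency gives
  \<open>(\<phi> t - y) \<bullet> w \<le> 0\<close> for \<open>w \<in> F y\<close>, and the one-sided Lipschitz condition transfers this to
  the velocity \<open>\<phi>' t \<in> F (\<phi> t)\<close> up to an error \<open>k * (dist (\<phi> t) y)\<^sup>2\<close>. Hence the upper right
  Dini derivative of \<open>g\<close> is at most \<open>2 * k * g\<close>, so \<open>exp (- 2 * k * t) * g t\<close> has nonpositive
  Dini derivative off a null set. Being absolutely continuous from above, it is nonincreasing; it
  vanishes at \<open>t = 0\<close>, so \<open>g\<close> vanishes on \<open>{0..T}\<close>.\<close>

section \<open>Non-overlapping families of intervals\<close>

definition nonoverlapping_intervals :: "real set \<Rightarrow> nat \<Rightarrow> (nat \<Rightarrow> real) \<Rightarrow> (nat \<Rightarrow> real) \<Rightarrow> bool" where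
  "nonoverlapping_intervals I n c d \<longleftrightarrow> (\<forall>i<n. c i \<le> d i \<and> {c i..d i} \<subseteq> I) \<and>
      (\<forall>i<n. \<forall>j<n. i \<noteq> j \<longrightarrow> d i \<le> c j \<or> d j \<le> c i)"

lemma abs_cont_on_nonoverlapping_intervals:
  assumes "abs_cont_on I f" "\<epsilon> > 0"
  obtains \<delta> where "\<delta> > 0" "\<And>n c d. nonoverlapping_intervals I n c d \<Longrightarrow> (\<Sum>i<n. d i - c i) < \<delta> \<Longrightarrow>
      (\<Sum>i<n. norm (f (d i) - f (c i))) < \<epsilon>"
proof -
  obtain \<delta> where "\<delta> > 0" and \<delta>: "\<forall>(n::nat) (c::nat \<Rightarrow> real) d.
      (\<forall>i<n. c i \<le> d i \<and> {c i..d i} \<subseteq> I) \<and> (\<forall>i<n. \<forall>j<n. i \<noteq> j \<longrightarrow> d i \<le> c j \<or> d j \<le> c i) \<and>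
      (\<Sum>i<n. d i - c i) < \<delta> \<longrightarrow> (\<Sum>i<n. norm (f (d i) - f (c i))) < \<epsilon>"
    using assms unfolding abs_cont_on_def by blast
  show ?thesis
    by (rule that[OF \<open>\<delta> > 0\<close>]) (use \<delta> in \<open>auto simp: nonoverlapping_intervals_def\<close>)
qed

lemma nonoverlapping_intervalsD:
  assumes "nonoverlapping_intervals I n c d" "i < n"
  shows "c i \<le> d i" "c i \<in> I" "d i \<in> I"
  using assms unfolding nonoverlapping_intervals_def by (auto simp: subset_iff)

lemma nonoverlapping_intervals_mono:
  "nonoverlapping_intervals I n c d \<Longrightarrow> I \<subseteq> J \<Longrightarrow> nonoverlapping_intervals J n c d"
  unfolding nonoverlapping_intervals_def by blast

lemma nonoverlapping_intervals_0: "nonoverlapping_intervals I 0 c d"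
  unfolding nonoverlapping_intervals_def by simp

lemma nonoverlapping_intervals_1:
  "a \<le> b \<Longrightarrow> {a..b} \<subseteq> I \<Longrightarrow> nonoverlapping_intervals I 1 (\<lambda>_. a) (\<lambda>_. b)"
  unfolding nonoverlapping_intervals_def by auto

lemma nonoverlapping_intervals_Suc:
  assumes "nonoverlapping_intervals I n c d" "\<forall>i<n. d i \<le> s" "s \<le> s'" "{s..s'} \<subseteq> I"
  shows "nonoverlapping_intervals I (Suc n) (c(n := s)) (d(n := s'))"
  using assms unfolding nonoverlapping_intervals_def by (auto simp: less_Suc_eq)

lemma nonoverlapping_intervals_lengths_le_measure:
  assumes "nonoverlapping_intervals U n c d" "U \<in> lmeasurable"
  shows "(\<Sum>i<n. d i - c i) \<le> measure lebesgue U"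
proof -
  have cd: "\<forall>i<n. c i \<le> d i \<and> {c i..d i} \<subseteq> U" "\<forall>i<n. \<forall>j<n. i \<noteq> j \<longrightarrow> d i \<le> c j \<or> d j \<le> c i"
    using assms(1) unfolding nonoverlapping_intervals_def by auto
  have "(\<Sum>i<n. d i - c i) = (\<Sum>i<n. measure lebesgue {c i..d i})"
    using cd by (intro sum.cong) auto
  also have "\<dots> = measure lebesgue (\<Union>i<n. {c i..d i})"
  proof (rule measure_negligible_finite_Union_image[symmetric])
    show "pairwise (\<lambda>i j. negligible ({c i..d i} \<inter> {c j..d j})) {..<n}"
    proof (rule pairwiseI)
      fix i j assume "i \<in> {..<n}" "j \<in> {..<n}" "i \<noteq> j"
      then have "{c i..d i} \<inter> {c j..d j} \<subseteq> {d i, d j}"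
        using cd by fastforce
      then show "negligible ({c i..d i} \<inter> {c j..d j})"
        by (meson finite.emptyI finite_insert negligible_finite negligible_subset)
    qed
  qed auto
  also have "\<dots> \<le> measure lebesgue U"
    using cd assms(2) by (intro measure_mono_fmeasurable) auto
  finally show ?thesis .
qed

lemma null_set_in_open_of_small_measure:
  assumes "Z \<in> null_sets lebesgue" "e > 0"
  obtains U where "open U" "Z \<subseteq> U" "U \<in> lmeasurable" "measure lebesgue U < e"
proof -
  have "Z \<in> sets lebesgue" using assms(1) by auto
  then obtain U where U: "open U" "Z \<subseteq> U" "U - Z \<in> lmeasurable"
      "emeasure lebesgue (U - Z) < ennreal e"
    using sets_lebesgue_outer_open assms(2) by blast
  have Z: "Z \<in> lmeasurable" "measure lebesgue Z = 0"
    using assms(1) by (auto simp: fmeasurableI_null_sets measure_eq_0_null_sets)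
  have UZ: "U = (U - Z) \<union> Z" using U(2) by blast
  then have "U \<in> lmeasurable" using U(3) Z(1) by (metis fmeasurable.Un)
  moreover have "measure lebesgue U \<le> measure lebesgue (U - Z) + measure lebesgue Z"
    using UZ U(3) Z(1) by (metis measure_Un_le fmeasurableD)
  moreover have "measure lebesgue (U - Z) < e"
    using U(3,4) assms(2) by (simp add: emeasure_eq_measure2 ennreal_less_iff)
  ultimately show ?thesis using that U(1,2) Z(2) by fastforce
qed

lemma abs_cont_on_imp_continuous_on:
  assumes "abs_cont_on {a..b} f"
  shows "continuous_on {a..b} f"
  unfolding continuous_on_iff
proof (intro ballI allI impI)
  fix x e assume x: "x \<in> {a..b}" and e: "(0::real) < e"
  obtain \<delta> where "\<delta> > 0" and \<delta>: "\<And>n c d. nonoverlapping_intervals {a..b} n c d \<Longrightarrow>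
      (\<Sum>i<n. d i - c i) < \<delta> \<Longrightarrow> (\<Sum>i<n. norm (f (d i) - f (c i))) < e"
    using abs_cont_on_nonoverlapping_intervals[OF assms e] by blast
  show "\<exists>d>0. \<forall>x'\<in>{a..b}. dist x' x < d \<longrightarrow> dist (f x') (f x) < e"
  proof (intro exI conjI ballI impI)
    fix x' assume x': "x' \<in> {a..b}" "dist x' x < \<delta>"
    have "nonoverlapping_intervals {a..b} 1 (\<lambda>_. min x x') (\<lambda>_. max x x')"
      using x x' by (intro nonoverlapping_intervals_1) auto
    moreover have "(\<Sum>i<(1::nat). max x x' - min x x') < \<delta>"
      using x' by (auto simp: dist_real_def max_def min_def)
    ultimately have "norm (f (max x x') - f (min x x')) < e"
      using \<delta> by fastforce
    then show "dist (f x') (f x) < e"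
      by (cases "x \<le> x'") (auto simp: dist_norm norm_minus_commute max_def min_def)
  qed fact
qed

section \<open>Dini derivatives and monotonicity\<close>

definition upper_abs_cont_on :: "real set \<Rightarrow> (real \<Rightarrow> real) \<Rightarrow> bool" where
  "upper_abs_cont_on I f \<longleftrightarrow> (\<forall>\<epsilon>>0. \<exists>\<delta>>0. \<forall>n c d. nonoverlapping_intervals I n c d \<and>
      (\<Sum>i<n. d i - c i) < \<delta> \<longrightarrow> (\<Sum>i<n. f (d i) - f (c i)) < \<epsilon>)"

lemma upper_abs_cont_onE:
  assumes "upper_abs_cont_on I f" "\<epsilon> > 0"
  obtains \<delta> where "\<delta> > 0" "\<And>n c d. nonoverlapping_intervals I n c d \<Longrightarrow> (\<Sum>i<n. d i - c i) < \<delta> \<Longrightarrow>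
      (\<Sum>i<n. f (d i) - f (c i)) < \<epsilon>"
proof -
  obtain \<delta> where "\<delta> > 0" and "\<forall>n c d. nonoverlapping_intervals I n c d \<and>
      (\<Sum>i<n. d i - c i) < \<delta> \<longrightarrow> (\<Sum>i<n. f (d i) - f (c i)) < \<epsilon>"
    using assms unfolding upper_abs_cont_on_def by auto
  then show ?thesis using that by simp
qed

lemma upper_abs_cont_on_dominated:
  fixes \<phi> :: "real \<Rightarrow> 'a::real_normed_vector"
  assumes "abs_cont_on I \<phi>" "M \<ge> 0"
    and dom: "\<And>c d. c \<in> I \<Longrightarrow> d \<in> I \<Longrightarrow> c \<le> d \<Longrightarrow> f d - f c \<le> M * norm (\<phi> d - \<phi> c)"
  shows "upper_abs_cont_on I f"
  unfolding upper_abs_cont_on_def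
proof (intro allI impI)
  fix \<epsilon> :: real assume "\<epsilon> > 0"
  then have "\<epsilon> / (M + 1) > 0" using assms(2) by simp
  then obtain \<delta> where "\<delta> > 0" and \<delta>: "\<And>n c d. nonoverlapping_intervals I n c d \<Longrightarrow>
      (\<Sum>i<n. d i - c i) < \<delta> \<Longrightarrow> (\<Sum>i<n. norm (\<phi> (d i) - \<phi> (c i))) < \<epsilon> / (M + 1)"
    using abs_cont_on_nonoverlapping_intervals[OF assms(1)] by blast
  show "\<exists>\<delta>>0. \<forall>n c d. nonoverlapping_intervals I n c d \<and> (\<Sum>i<n. d i - c i) < \<delta> \<longrightarrow>
      (\<Sum>i<n. f (d i) - f (c i)) < \<epsilon>"
  proof (intro exI conjI allI impI)
    fix n c d assume ncd: "nonoverlapping_intervals I n c d \<and> (\<Sum>i<n. d i - c i) < \<delta>"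
    have "(\<Sum>i<n. f (d i) - f (c i)) \<le> (\<Sum>i<n. M * norm (\<phi> (d i) - \<phi> (c i)))"
      using ncd nonoverlapping_intervalsD by (intro sum_mono dom) auto
    also have "\<dots> \<le> (M + 1) * (\<Sum>i<n. norm (\<phi> (d i) - \<phi> (c i)))"
      by (simp add: sum_distrib_left[symmetric] mult_right_mono sum_nonneg)
    also have "\<dots> < (M + 1) * (\<epsilon> / (M + 1))"
      using \<delta> ncd assms(2) by (intro mult_strict_left_mono) auto
    also have "\<dots> = \<epsilon>" using assms(2) by simp
    finally show "(\<Sum>i<n. f (d i) - f (c i)) < \<epsilon>" .
  qed fact
qed

definition interval_increments :: "(real \<Rightarrow> real) \<Rightarrow> real set \<Rightarrow> real set" where
  "interval_increments f I =
     {\<Sum>i<n. f (d i) - f (c i) | n c d. nonoverlapping_intervals I n c d}"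

lemma zero_in_interval_increments: "0 \<in> interval_increments f I"
  unfolding interval_increments_def using nonoverlapping_intervals_0 by force

lemma interval_increments_mono: "I \<subseteq> J \<Longrightarrow> interval_increments f I \<subseteq> interval_increments f J"
  unfolding interval_increments_def using nonoverlapping_intervals_mono by blast

lemma interval_increments_extend:
  assumes "\<sigma> \<in> interval_increments f I" "I \<subseteq> J" "I \<subseteq> {..s}" "s \<le> s'" "{s..s'} \<subseteq> J"
  shows "\<sigma> + (f s' - f s) \<in> interval_increments f J"
proof -
  obtain n c d where ncd: "nonoverlapping_intervals I n c d" "\<sigma> = (\<Sum>i<n. f (d i) - f (c i))"
    using assms(1) unfolding interval_increments_def by blast
  have "\<forall>i<n. d i \<le> s" using nonoverlapping_intervalsD(3)[OF ncd(1)] assms(3) by auto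
  with nonoverlapping_intervals_mono[OF ncd(1) assms(2)]
  have "nonoverlapping_intervals J (Suc n) (c(n := s)) (d(n := s'))"
    using assms(4,5) by (rule nonoverlapping_intervals_Suc)
  moreover have "\<sigma> + (f s' - f s) = (\<Sum>i<Suc n. f ((d(n := s')) i) - f ((c(n := s)) i))"
    using ncd(2) by simp
  ultimately show ?thesis unfolding interval_increments_def by blast
qed

lemma upper_abs_cont_on_interval_increments_lt:
  assumes "upper_abs_cont_on {a..b} f" "e > 0"
  obtains \<delta> where "\<delta> > 0" "\<And>U I \<sigma>. U \<in> lmeasurable \<Longrightarrow> measure lebesgue U < \<delta> \<Longrightarrow>
      I \<subseteq> U \<inter> {a..b} \<Longrightarrow> \<sigma> \<in> interval_increments f I \<Longrightarrow> \<sigma> < e"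
proof -
  obtain \<delta> where "\<delta> > 0" and \<delta>: "\<And>n c d. nonoverlapping_intervals {a..b} n c d \<Longrightarrow>
      (\<Sum>i<n. d i - c i) < \<delta> \<Longrightarrow> (\<Sum>i<n. f (d i) - f (c i)) < e"
    using upper_abs_cont_onE[OF assms] by blast
  have "\<sigma> < e" if U: "U \<in> lmeasurable" "measure lebesgue U < \<delta>" and "I \<subseteq> U \<inter> {a..b}"
    and "\<sigma> \<in> interval_increments f I" for U I \<sigma>
  proof -
    obtain n c d where ncd: "nonoverlapping_intervals I n c d" "\<sigma> = (\<Sum>i<n. f (d i) - f (c i))"
      using \<open>\<sigma> \<in> interval_increments f I\<close> unfolding interval_increments_def by blast
    have "(\<Sum>i<n. d i - c i) < \<delta>"
      using nonoverlapping_intervals_lengths_le_measure[OF nonoverlapping_intervals_mono[OF ncd(1)] U(1)]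
        \<open>I \<subseteq> U \<inter> {a..b}\<close> U(2) by fastforce
    moreover have "nonoverlapping_intervals {a..b} n c d"
      using ncd(1) by (rule nonoverlapping_intervals_mono) (use \<open>I \<subseteq> U \<inter> {a..b}\<close> in auto)
    ultimately show ?thesis using \<delta> ncd(2) by simp
  qed
  with \<open>\<delta> > 0\<close> show ?thesis using that by blast
qed

text \<open>The null set where no Dini bound is available is covered by an open set \<open>U\<close> of small
  measure; upper absolute continuity then makes the total increase of \<open>f\<close> inside \<open>U\<close> small, and
  \<open>V\<close> records it.\<close>

lemma upper_abs_cont_on_increment_absorber:
  assumes f: "upper_abs_cont_on {a..b} f" and Z: "Z \<in> null_sets lebesgue" and "e > 0"
  obtains U V where "open U" "Z \<subseteq> U"
    and "\<And>s. s \<le> b \<Longrightarrow> 0 \<le> V s \<and> V s \<le> e"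
    and "\<And>s s'. s \<le> s' \<Longrightarrow> s' \<le> b \<Longrightarrow> V s \<le> V s'"
    and "\<And>s s'. a \<le> s \<Longrightarrow> s \<le> s' \<Longrightarrow> s' \<le> b \<Longrightarrow> {s..s'} \<subseteq> U \<Longrightarrow> V s + (f s' - f s) \<le> V s'"
proof -
  obtain \<delta> where "\<delta> > 0" and small: "\<And>U I \<sigma>. U \<in> lmeasurable \<Longrightarrow> measure lebesgue U < \<delta> \<Longrightarrow>
      I \<subseteq> U \<inter> {a..b} \<Longrightarrow> \<sigma> \<in> interval_increments f I \<Longrightarrow> \<sigma> < e"
    using upper_abs_cont_on_interval_increments_lt[OF f \<open>e > 0\<close>] by blast
  obtain U where U: "open U" "Z \<subseteq> U" "U \<in> lmeasurable" "measure lebesgue U < \<delta>"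
    using null_set_in_open_of_small_measure[OF Z \<open>\<delta> > 0\<close>] by blast
  define V where "V s = Sup (interval_increments f (U \<inter> {a..s}))" for s
  have lt: "\<sigma> < e" if "s \<le> b" "\<sigma> \<in> interval_increments f (U \<inter> {a..s})" for s \<sigma>
    using small[OF U(3,4) _ that(2)] that(1) by (force simp: subset_iff)
  then have bdd: "bdd_above (interval_increments f (U \<inter> {a..s}))" if "s \<le> b" for s
    using that by (meson bdd_aboveI less_imp_le)
  show ?thesis
  proof (rule that[of U V])
    fix s assume "s \<le> b"
    have "V s \<le> e"
      unfolding V_def using zero_in_interval_increments lt[OF \<open>s \<le> b\<close>]
      by (intro cSup_least) (auto intro: less_imp_le)
    moreover have "0 \<le> V s"
      unfolding V_def using zero_in_interval_increments bdd[OF \<open>s \<le> b\<close>] by (rule cSup_upper)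
    ultimately show "0 \<le> V s \<and> V s \<le> e" by simp
  next
    fix s s' assume "s \<le> s'" "s' \<le> b"
    then have "interval_increments f (U \<inter> {a..s}) \<subseteq> interval_increments f (U \<inter> {a..s'})"
      by (intro interval_increments_mono) auto
    then show "V s \<le> V s'"
      unfolding V_def using zero_in_interval_increments[of f "U \<inter> {a..s}"] bdd[OF \<open>s' \<le> b\<close>]
      by (intro cSup_subset_mono) auto
  next
    fix s s' assume s: "a \<le> s" "s \<le> s'" "s' \<le> b" "{s..s'} \<subseteq> U"
    have "\<sigma> + (f s' - f s) \<le> V s'" if "\<sigma> \<in> interval_increments f (U \<inter> {a..s})" for \<sigma>
      unfolding V_def using s bdd[OF s(3)]
      by (intro cSup_upper interval_increments_extend[OF that]) auto
    then have "V s \<le> V s' - (f s' - f s)"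
      unfolding V_def using zero_in_interval_increments
      by (intro cSup_least) (auto simp: algebra_simps)
    then show "V s + (f s' - f s) \<le> V s'" by simp
  qed (use U in auto)
qed

lemma upper_abs_cont_on_le_left_bound:
  assumes f: "upper_abs_cont_on {a..b} f" and "a < s" "s \<le> b"
    and bound: "\<And>r. a \<le> r \<Longrightarrow> r < s \<Longrightarrow> f r \<le> y"
  shows "f s \<le> y"
proof (rule field_le_epsilon)
  fix \<eta> :: real assume "\<eta> > 0"
  then obtain \<delta> where "\<delta> > 0" and \<delta>: "\<And>n c d. nonoverlapping_intervals {a..b} n c d \<Longrightarrow>
      (\<Sum>i<n. d i - c i) < \<delta> \<Longrightarrow> (\<Sum>i<n. f (d i) - f (c i)) < \<eta>"
    using upper_abs_cont_onE[OF f] by blast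
  define r where "r = max a (s - \<delta> / 2)"
  have r: "a \<le> r" "r < s" "s - r < \<delta>" using \<open>a < s\<close> \<open>\<delta> > 0\<close> unfolding r_def by auto
  then have "f s - f r < \<eta>"
    using \<delta>[OF nonoverlapping_intervals_1[of r s]] \<open>s \<le> b\<close> by simp
  with bound[OF r(1,2)] show "f s \<le> y + \<eta>" by linarith
qed

lemma real_induction:
  fixes a b :: real
  assumes "a \<le> b" "P a"
    and left: "\<And>s. a < s \<Longrightarrow> s \<le> b \<Longrightarrow> \<forall>r\<in>{a..<s}. P r \<Longrightarrow> P s"
    and right: "\<And>s. a \<le> s \<Longrightarrow> s < b \<Longrightarrow> \<forall>r\<in>{a..s}. P r \<Longrightarrow> \<forall>\<^sub>F r in at_right s. P r"
  shows "\<forall>s\<in>{a..b}. P s"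
proof -
  define A where "A = {s\<in>{a..b}. \<forall>r\<in>{a..s}. P r}"
  define s0 where "s0 = Sup A"
  have aA: "a \<in> A" unfolding A_def using assms(1,2) by auto
  have bdd: "bdd_above A" unfolding A_def by (rule bdd_aboveI[of _ b]) auto
  have s0: "a \<le> s0" "s0 \<le> b"
    unfolding s0_def using aA bdd by (auto intro!: cSup_upper cSup_least simp: A_def)
  have below: "\<forall>r\<in>{a..<s0}. P r"
  proof
    fix r assume r: "r \<in> {a..<s0}"
    then have "r < Sup A" unfolding s0_def by simp
    then obtain s where "s \<in> A" "r < s"
      using less_cSup_iff[OF _ bdd] aA by blast
    then show "P r" using r unfolding A_def by auto
  qed
  have "P s0"
  proof (cases "s0 = a")
    case False
    then show ?thesis using s0 below by (intro left) auto
  qed (use \<open>P a\<close> in simp)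
  with below have upto: "\<forall>r\<in>{a..s0}. P r" by fastforce
  have "s0 = b"
  proof (rule ccontr)
    assume "s0 \<noteq> b"
    with s0 have "s0 < b" by simp
    then obtain \<beta> where "\<beta> > s0" and \<beta>: "\<And>r. s0 < r \<Longrightarrow> r < \<beta> \<Longrightarrow> P r"
      using right[OF s0(1) _ upto] unfolding eventually_at_right_field by blast
    define s' where "s' = min ((s0 + \<beta>) / 2) b"
    have "P r" if "r \<in> {a..s'}" for r
      using upto \<beta>[of r] that \<open>\<beta> > s0\<close> unfolding s'_def by (cases "r \<le> s0") auto
    then have "s' \<in> A" unfolding A_def using s0 \<open>\<beta> > s0\<close> \<open>s0 < b\<close> s'_def by auto
    then have "s' \<le> s0" unfolding s0_def using bdd by (rule cSup_upper)
    with \<open>\<beta> > s0\<close> \<open>s0 < b\<close> show False unfolding s'_def by (simp add: min_def split: if_splits)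
  qed
  with upto show ?thesis by simp
qed

definition right_dini_le :: "(real \<Rightarrow> real) \<Rightarrow> real \<Rightarrow> real \<Rightarrow> bool" where
  "right_dini_le f t c \<longleftrightarrow> (\<forall>\<epsilon>>0. \<forall>\<^sub>F s in at_right t. f s \<le> f t + (c + \<epsilon>) * (s - t))"

lemma upper_abs_cont_on_increment_le_absorber:
  fixes f V :: "real \<Rightarrow> real"
  assumes "a \<le> b" and f: "upper_abs_cont_on {a..b} f" and "open U" "e > 0"
    and "0 \<le> V a"
    and V_mono: "\<And>s s'. s \<le> s' \<Longrightarrow> s' \<le> b \<Longrightarrow> V s \<le> V s'"
    and V_jump: "\<And>s s'. a \<le> s \<Longrightarrow> s \<le> s' \<Longrightarrow> s' \<le> b \<Longrightarrow> {s..s'} \<subseteq> U \<Longrightarrow> V s + (f s' - f s) \<le> V s'"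
    and dini: "\<And>t. t \<in> {a..<b} \<Longrightarrow> t \<notin> U \<Longrightarrow> right_dini_le f t 0"
  shows "\<forall>s\<in>{a..b}. f s \<le> f a + e * (s - a) + V s"
proof (rule real_induction)
  show "f a \<le> f a + e * (a - a) + V a" using \<open>0 \<le> V a\<close> by simp
next
  fix s assume s: "a < s" "s \<le> b" and below: "\<forall>r\<in>{a..<s}. f r \<le> f a + e * (r - a) + V r"
  have "f r \<le> f a + e * (s - a) + V s" if "a \<le> r" "r < s" for r
  proof -
    have "f r \<le> f a + e * (r - a) + V r" using below that by simp
    moreover have "V r \<le> V s" using V_mono[of r s] that s by simp
    moreover have "e * (r - a) \<le> e * (s - a)" using that \<open>e > 0\<close> by simp
    ultimately show ?thesis by linarith
  qed
  with f s show "f s \<le> f a + e * (s - a) + V s" by (rule upper_abs_cont_on_le_left_bound)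
next
  fix s assume s: "a \<le> s" "s < b" and "\<forall>r\<in>{a..s}. f r \<le> f a + e * (r - a) + V r"
  then have Ps: "f s \<le> f a + e * (s - a) + V s" by simp
  show "\<forall>\<^sub>F r in at_right s. f r \<le> f a + e * (r - a) + V r"
  proof (cases "s \<in> U")
    case True
    then obtain \<rho> where "\<rho> > 0" "ball s \<rho> \<subseteq> U" using \<open>open U\<close> open_contains_ball by blast
    have "f r \<le> f a + e * (r - a) + V r" if r: "s < r" "r < min (s + \<rho>) b" for r
    proof -
      have "{s..r} \<subseteq> U" using r \<open>ball s \<rho> \<subseteq> U\<close> by (force simp: dist_real_def)
      then have "V s + (f r - f s) \<le> V r" using V_jump[of s r] s r by simp
      moreover have "e * (s - a) \<le> e * (r - a)" using r \<open>e > 0\<close> by simp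
      ultimately show ?thesis using Ps by linarith
    qed
    then show ?thesis unfolding eventually_at_right_field using \<open>\<rho> > 0\<close> s
      by (intro exI[of _ "min (s + \<rho>) b"]) auto
  next
    case False
    with s dini \<open>e > 0\<close> have "\<forall>\<^sub>F r in at_right s. f r \<le> f s + (0 + e) * (r - s)"
      unfolding right_dini_le_def by simp
    moreover have "\<forall>\<^sub>F r in at_right s. r < b"
      unfolding eventually_at_right_field using s by blast
    ultimately show ?thesis using eventually_at_right_less
    proof eventually_elim
      case (elim r)
      then have "V s \<le> V r" using V_mono by simp
      moreover have "f r \<le> f s + e * (r - s)" using elim(1) by simp
      moreover have "e * (r - a) = e * (s - a) + e * (r - s)" by (simp add: algebra_simps)
      ultimately show ?case using Ps by linarith
    qed
  qed
qed fact

lemma upper_abs_cont_on_nonincreasing: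
  fixes f :: "real \<Rightarrow> real"
  assumes "a \<le> b" and f: "upper_abs_cont_on {a..b} f" and Z: "Z \<in> null_sets lebesgue"
    and dini: "\<And>t. t \<in> {a..<b} \<Longrightarrow> t \<notin> Z \<Longrightarrow> right_dini_le f t 0"
  shows "f b \<le> f a"
proof (rule field_le_epsilon)
  fix e :: real assume "e > 0"
  define e' where "e' = e / (b - a + 1)"
  have "e' > 0" using \<open>e > 0\<close> \<open>a \<le> b\<close> unfolding e'_def by simp
  then obtain U V where "open U" "Z \<subseteq> U" and V: "\<And>s. s \<le> b \<Longrightarrow> 0 \<le> V s \<and> V s \<le> e'"
    and "\<And>s s'. s \<le> s' \<Longrightarrow> s' \<le> b \<Longrightarrow> V s \<le> V s'"
    and "\<And>s s'. a \<le> s \<Longrightarrow> s \<le> s' \<Longrightarrow> s' \<le> b \<Longrightarrow> {s..s'} \<subseteq> U \<Longrightarrow> V s + (f s' - f s) \<le> V s'"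
    using upper_abs_cont_on_increment_absorber[OF f Z] by metis
  moreover have "right_dini_le f t 0" if "t \<in> {a..<b}" "t \<notin> U" for t
    using dini that \<open>Z \<subseteq> U\<close> by blast
  ultimately have "\<forall>s\<in>{a..b}. f s \<le> f a + e' * (s - a) + V s"
    using \<open>a \<le> b\<close> f \<open>e' > 0\<close> V[OF \<open>a \<le> b\<close>]
    by (intro upper_abs_cont_on_increment_le_absorber) auto
  moreover have "e' * (b - a) + e' = e' * (b - a + 1)" by (simp add: algebra_simps)
  moreover have "e' * (b - a + 1) = e" unfolding e'_def using \<open>a \<le> b\<close> by simp
  ultimately show "f b \<le> f a + e" using V[of b] \<open>a \<le> b\<close> by force
qed

lemma has_real_derivative_imp_right_dini_le:
  assumes "(f has_real_derivative c) (at t within {t..u})" "t < u"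
  shows "right_dini_le f t c"
  unfolding right_dini_le_def
proof (intro allI impI)
  fix \<epsilon> :: real assume "\<epsilon> > 0"
  have "((\<lambda>s. (f s - f t) / (s - t)) \<longlongrightarrow> c) (at_right t)"
    using assms by (simp add: has_field_derivative_iff at_within_Icc_at_right)
  then have "\<forall>\<^sub>F s in at_right t. (f s - f t) / (s - t) < c + \<epsilon>"
    using \<open>\<epsilon> > 0\<close> by (intro order_tendstoD) auto
  with eventually_at_right_less show "\<forall>\<^sub>F s in at_right t. f s \<le> f t + (c + \<epsilon>) * (s - t)"
    by eventually_elim (simp add: pos_divide_less_eq)
qed

lemma right_dini_le_majorant:
  assumes "right_dini_le h t c" "f t = h t" "\<And>s. f s \<le> h s" "c \<le> c'"
  shows "right_dini_le f t c'"
  unfolding right_dini_le_def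
proof (intro allI impI)
  fix \<epsilon> :: real assume "\<epsilon> > 0"
  with assms(1) have "\<forall>\<^sub>F s in at_right t. h s \<le> h t + (c + \<epsilon>) * (s - t)"
    unfolding right_dini_le_def by simp
  with eventually_at_right_less show "\<forall>\<^sub>F s in at_right t. f s \<le> f t + (c' + \<epsilon>) * (s - t)"
  proof eventually_elim
    case (elim s)
    have "(c + \<epsilon>) * (s - t) \<le> (c' + \<epsilon>) * (s - t)"
      using elim(1) assms(4) by (intro mult_right_mono) auto
    then show ?case using elim(2) assms(2) assms(3)[of s] by linarith
  qed
qed

lemma right_dini_le_exp_weight:
  fixes L :: real
  assumes "right_dini_le g t (L * g t)" "L \<ge> 0" "g t \<ge> 0"
  shows "right_dini_le (\<lambda>s. exp (- L * s) * g s) t 0"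
  unfolding right_dini_le_def
proof (intro allI impI)
  fix \<epsilon> :: real assume "\<epsilon> > 0"
  then have "\<forall>\<^sub>F s in at_right t. g s \<le> g t + (L * g t + \<epsilon> * exp (L * t)) * (s - t)"
    using assms(1) unfolding right_dini_le_def by simp
  with eventually_at_right_less
  show "\<forall>\<^sub>F s in at_right t. exp (- L * s) * g s \<le> exp (- L * t) * g t + (0 + \<epsilon>) * (s - t)"
  proof eventually_elim
    case (elim s)
    have "exp (- L * s) * (1 + L * (s - t)) \<le> exp (- L * s) * exp (L * (s - t))"
      by (simp add: exp_ge_add_one_self)
    also have "\<dots> = exp (- L * t)" by (simp add: exp_add[symmetric] algebra_simps)
    finally have weight: "g t * (exp (- L * s) * (1 + L * (s - t))) \<le> g t * exp (- L * t)"
      using assms(3) by (rule mult_left_mono)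
    have "exp (- L * s) \<le> exp (- L * t)" using elim(1) assms(2) by (simp add: mult_left_mono)
    then have "exp (- L * s) * (\<epsilon> * exp (L * t)) \<le> exp (- L * t) * (\<epsilon> * exp (L * t))"
      using \<open>\<epsilon> > 0\<close> by (intro mult_right_mono) auto
    also have "\<dots> = \<epsilon>" by (simp add: exp_add[symmetric])
    finally have drift: "exp (- L * s) * (\<epsilon> * exp (L * t)) * (s - t) \<le> \<epsilon> * (s - t)"
      using elim(1) by (intro mult_right_mono) auto
    have "exp (- L * s) * g s \<le> exp (- L * s) * (g t + (L * g t + \<epsilon> * exp (L * t)) * (s - t))"
      using elim(2) by (intro mult_left_mono) auto
    also have "\<dots> = g t * (exp (- L * s) * (1 + L * (s - t))) +
        exp (- L * s) * (\<epsilon> * exp (L * t)) * (s - t)"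
      by (simp add: algebra_simps)
    finally show ?case using weight drift by (simp add: mult.commute)
  qed
qed

section \<open>Metric projections\<close>

lemma Proj_frontier_subset_Proj:
  fixes K :: "'a::euclidean_space set"
  assumes "closed K" "z \<notin> K"
  shows "Proj (frontier K) z \<subseteq> Proj K z"
proof
  fix y assume "y \<in> Proj (frontier K) z"
  then have y: "y \<in> frontier K" and nearest: "\<forall>p\<in>frontier K. dist z y \<le> dist z p"
    unfolding Proj_def by auto
  have "dist z y \<le> dist z k" if "k \<in> K" for k
  proof -
    have "closed_segment z k \<inter> frontier K \<noteq> {}"
      by (rule connected_Int_frontier) (use that assms(2) in auto)
    then obtain p where p: "p \<in> closed_segment z k" "p \<in> frontier K" by blast
    have "dist p z \<le> dist z k" using dist_in_closed_segment[OF p(1)] by blast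
    then show ?thesis using nearest p(2) by (metis dist_commute order_trans)
  qed
  moreover have "y \<in> K" using y assms(1) frontier_subset_closed by blast
  ultimately show "y \<in> Proj K z" unfolding Proj_def by blast
qed

lemma infdist_Proj:
  assumes "y \<in> Proj K z"
  shows "infdist z K = dist z y"
proof (rule antisym)
  show "infdist z K \<le> dist z y" using assms unfolding Proj_def by (auto intro: infdist_le)
  have "K \<noteq> {}" using assms unfolding Proj_def by auto
  then show "dist z y \<le> infdist z K"
    using assms unfolding Proj_def infdist_def by (auto intro: cINF_greatest)
qed

lemma bounded_UN_Proj:
  fixes P :: "'a::real_normed_vector set"
  assumes "bounded P"
  shows "bounded (\<Union>z\<in>P. Proj S z)"
proof (cases "S = {}")
  case False
  then obtain s where "s \<in> S" by blast
  obtain B where B: "\<And>z. z \<in> P \<Longrightarrow> norm z \<le> B"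
    using assms unfolding bounded_iff by blast
  have "norm y \<le> 2 * B + norm s" if "z \<in> P" "y \<in> Proj S z" for z y
  proof -
    have "dist z y \<le> dist z s" using that(2) \<open>s \<in> S\<close> unfolding Proj_def by blast
    moreover have "norm y \<le> norm z + dist z y" by (metis dist_commute dist_norm norm_triangle_sub)
    moreover have "dist z s \<le> norm z + norm s" by (simp add: dist_norm norm_triangle_ineq4)
    ultimately show ?thesis using B[OF that(1)] by linarith
  qed
  then show ?thesis unfolding bounded_iff by blast
qed (simp add: Proj_def)

lemma Proj_inner_contingent_cone_nonpos:
  fixes K :: "'a::real_inner set"
  assumes "y \<in> Proj K z" "w \<in> contingent_cone K y"
  shows "(z - y) \<bullet> w \<le> 0"
proof -
  obtain t u where t: "\<forall>i. t i > 0" "t \<longlonglongrightarrow> 0" and u: "u \<longlonglongrightarrow> w" and tu: "\<forall>i. y + t i *\<^sub>R u i \<in> K"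
    using assms(2) unfolding contingent_cone_def by blast
  have "(z - y) \<bullet> u i \<le> t i * (u i \<bullet> u i) / 2" for i
  proof -
    let ?a = "z - y"
    have "dist z y \<le> dist z (y + t i *\<^sub>R u i)" using assms(1) tu unfolding Proj_def by blast
    then have "norm ?a \<le> norm (?a - t i *\<^sub>R u i)" by (simp add: dist_norm algebra_simps)
    then have "?a \<bullet> ?a \<le> (?a - t i *\<^sub>R u i) \<bullet> (?a - t i *\<^sub>R u i)"
      by (simp add: power_mono flip: power2_norm_eq_inner)
    then have "t i * (2 * (?a \<bullet> u i)) \<le> t i * (t i * (u i \<bullet> u i))"
      by (simp add: inner_diff_left inner_diff_right inner_commute algebra_simps)
    then show ?thesis using t(1) mult_le_cancel_left_pos[of "t i"] by simp
  qed
  moreover have "(\<lambda>i. (z - y) \<bullet> u i) \<longlonglongrightarrow> (z - y) \<bullet> w" using u by (intro tendsto_intros)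
  moreover have "(\<lambda>i. t i * (u i \<bullet> u i) / 2) \<longlonglongrightarrow> 0 * (w \<bullet> w) / 2"
    using t(2) u by (intro tendsto_intros) auto
  ultimately show ?thesis using LIMSEQ_le by fastforce
qed

section \<open>Invariance of the closed set\<close>

lemma infdist_sq_right_dini_le:
  fixes \<phi> :: "real \<Rightarrow> 'a::real_inner"
  assumes "(\<phi> has_vector_derivative v) (at t within {t..u})" "t < u"
    and "y \<in> Proj K (\<phi> t)" "(\<phi> t - y) \<bullet> v \<le> k * (dist (\<phi> t) y)\<^sup>2"
  shows "right_dini_le (\<lambda>s. (infdist (\<phi> s) K)\<^sup>2) t (2 * k * (infdist (\<phi> t) K)\<^sup>2)"
proof (rule right_dini_le_majorant)
  have d: "((\<lambda>s. \<phi> s - y) has_derivative (\<lambda>h. h *\<^sub>R v)) (at t within {t..u})"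
    using assms(1) unfolding has_vector_derivative_def by (auto intro: derivative_eq_intros)
  have "((\<lambda>s. (\<phi> s - y) \<bullet> (\<phi> s - y)) has_real_derivative 2 * ((\<phi> t - y) \<bullet> v)) (at t within {t..u})"
    unfolding has_field_derivative_def
    by (rule has_derivative_eq_rhs[OF has_derivative_inner[OF d d]])
      (simp add: fun_eq_iff inner_commute algebra_simps)
  then show "right_dini_le (\<lambda>s. (\<phi> s - y) \<bullet> (\<phi> s - y)) t (2 * ((\<phi> t - y) \<bullet> v))"
    using assms(2) by (rule has_real_derivative_imp_right_dini_le)
  have "y \<in> K" using assms(3) unfolding Proj_def by blast
  show "(infdist (\<phi> s) K)\<^sup>2 \<le> (\<phi> s - y) \<bullet> (\<phi> s - y)" for s
    using infdist_le[OF \<open>y \<in> K\<close>, of "\<phi> s"]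
    by (simp add: dist_norm power_mono infdist_nonneg flip: power2_norm_eq_inner)
  show "(infdist (\<phi> t) K)\<^sup>2 = (\<phi> t - y) \<bullet> (\<phi> t - y)"
    using infdist_Proj[OF assms(3)] by (simp add: dist_norm power2_norm_eq_inner)
  show "2 * ((\<phi> t - y) \<bullet> v) \<le> 2 * k * (infdist (\<phi> t) K)\<^sup>2"
    using assms(4) infdist_Proj[OF assms(3)] by simp
qed

lemma solution_infdist_sq_right_dini_le:
  fixes \<phi> :: "real \<Rightarrow> 'a::euclidean_space"
  assumes "is_solution C F D \<phi>" "{a..b} \<subseteq> D"
    and near: "\<And>t. t \<in> {a..b} \<Longrightarrow> \<phi> t \<notin> K \<Longrightarrow>
      \<exists>y\<in>Proj K (\<phi> t). \<forall>v\<in>F (\<phi> t). (\<phi> t - y) \<bullet> v \<le> k * (dist (\<phi> t) y)\<^sup>2"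
  obtains Z where "Z \<in> null_sets lebesgue"
    "\<And>t. t \<in> {a..<b} \<Longrightarrow> t \<notin> Z \<Longrightarrow> right_dini_le (\<lambda>s. (infdist (\<phi> s) K)\<^sup>2) t (2 * k * (infdist (\<phi> t) K)\<^sup>2)"
proof -
  obtain Z where "Z \<in> null_sets lebesgue"
    and der: "\<forall>t\<in>D - Z. \<exists>v\<in>F (\<phi> t). (\<phi> has_vector_derivative v) (at t within D)"
    using assms(1) unfolding is_solution_def by blast
  moreover have "right_dini_le (\<lambda>s. (infdist (\<phi> s) K)\<^sup>2) t (2 * k * (infdist (\<phi> t) K)\<^sup>2)"
    if t: "t \<in> {a..<b}" "t \<notin> Z" for t
  proof -
    obtain v where "v \<in> F (\<phi> t)" and "(\<phi> has_vector_derivative v) (at t within D)"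
      using der t assms(2) by force
    moreover have "{t..b} \<subseteq> D" using t assms(2) by auto
    ultimately have v: "(\<phi> has_vector_derivative v) (at t within {t..b})"
      by (blast intro: has_vector_derivative_within_subset)
    obtain y where "y \<in> Proj K (\<phi> t)" "(\<phi> t - y) \<bullet> v \<le> k * (dist (\<phi> t) y)\<^sup>2"
    proof (cases "\<phi> t \<in> K")
      case True
      then show ?thesis using that[of "\<phi> t"] unfolding Proj_def by simp
    next
      case False
      then show ?thesis using near[of t] t \<open>v \<in> F (\<phi> t)\<close> that by auto
    qed
    then show ?thesis using v t by (intro infdist_sq_right_dini_le) auto
  qed
  ultimately show ?thesis using that by blast
qed

lemma weighted_square_increment_le:
  fixes p q w w' W R :: real
  assumes "0 \<le> w'" "w' \<le> w" "w \<le> W" "0 \<le> p" "p \<le> R" "0 \<le> q" "q \<le> R"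
  shows "w' * p\<^sup>2 - w * q\<^sup>2 \<le> 2 * R * W * \<bar>p - q\<bar>"
proof -
  have "w' * p\<^sup>2 - w * q\<^sup>2 \<le> w * (p\<^sup>2 - q\<^sup>2)"
    using assms(2) by (simp add: mult_right_mono right_diff_distrib)
  also have "\<dots> \<le> w * \<bar>p\<^sup>2 - q\<^sup>2\<bar>"
    using assms(1,2) by (intro mult_left_mono) auto
  also have "\<dots> \<le> W * \<bar>p\<^sup>2 - q\<^sup>2\<bar>"
    using assms(3) by (intro mult_right_mono) auto
  also have "\<dots> = W * (\<bar>p - q\<bar> * (p + q))"
  proof -
    have "p\<^sup>2 - q\<^sup>2 = (p - q) * (p + q)" by (simp add: power2_eq_square algebra_simps)
    then show ?thesis using assms(4,6) by (simp add: abs_mult)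
  qed
  also have "\<dots> \<le> W * (\<bar>p - q\<bar> * (2 * R))"
    using assms by (intro mult_left_mono) auto
  finally show ?thesis by (simp add: algebra_simps)
qed

lemma infdist_sq_Gronwall:
  fixes \<phi> :: "real \<Rightarrow> 'a::real_normed_vector"
  assumes "a \<le> b" "abs_cont_on {a..b} \<phi>" "closed K" "\<phi> a \<in> K" "L \<ge> 0" "Z \<in> null_sets lebesgue"
    and dini: "\<And>t. t \<in> {a..<b} \<Longrightarrow> t \<notin> Z \<Longrightarrow> right_dini_le (\<lambda>s. (infdist (\<phi> s) K)\<^sup>2) t (L * (infdist (\<phi> t) K)\<^sup>2)"
  shows "\<phi> b \<in> K"
proof -
  define f where "f s = exp (- L * s) * (infdist (\<phi> s) K)\<^sup>2" for s
  have "compact (\<phi> ` {a..b})"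
    using abs_cont_on_imp_continuous_on[OF assms(2)] by (intro compact_continuous_image) auto
  then obtain B where B: "\<And>s. s \<in> {a..b} \<Longrightarrow> norm (\<phi> s) \<le> B"
    using compact_imp_bounded[of "\<phi> ` {a..b}"] unfolding bounded_iff by blast
  have R: "infdist (\<phi> s) K \<le> 2 * B" if "s \<in> {a..b}" for s
  proof -
    have "infdist (\<phi> s) K \<le> norm (\<phi> s) + norm (\<phi> a)"
      using infdist_le[OF assms(4), of "\<phi> s"] norm_triangle_ineq4[of "\<phi> s" "\<phi> a"]
      by (simp add: dist_norm)
    then show ?thesis using B[OF that] B[of a] assms(1) by simp
  qed
  have "upper_abs_cont_on {a..b} f"
  proof (rule upper_abs_cont_on_dominated[OF assms(2)])
    show "0 \<le> 2 * (2 * B) * exp (- L * a)"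
      using R[of a] assms(1) infdist_nonneg[of "\<phi> a" K] by simp
    fix c d assume cd: "c \<in> {a..b}" "d \<in> {a..b}" "c \<le> d"
    have "f d - f c \<le> 2 * (2 * B) * exp (- L * a) * \<bar>infdist (\<phi> d) K - infdist (\<phi> c) K\<bar>"
      unfolding f_def using cd R assms(5)
      by (intro weighted_square_increment_le) (auto simp: infdist_nonneg mult_left_mono)
    also have "\<dots> \<le> 2 * (2 * B) * exp (- L * a) * norm (\<phi> d - \<phi> c)"
      using infdist_triangle_abs[of "\<phi> d" K "\<phi> c"] R[of a] infdist_nonneg[of "\<phi> a" K] cd
      by (intro mult_left_mono) (auto simp: dist_norm)
    finally show "f d - f c \<le> 2 * (2 * B) * exp (- L * a) * norm (\<phi> d - \<phi> c)" .
  qed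
  moreover have "right_dini_le f t 0" if "t \<in> {a..<b}" "t \<notin> Z" for t
  proof -
    have "right_dini_le (\<lambda>s. exp (- L * s) * (infdist (\<phi> s) K)\<^sup>2) t 0"
      using dini[OF that] assms(5) by (rule right_dini_le_exp_weight) simp
    then show ?thesis by (simp add: f_def[abs_def])
  qed
  ultimately have "f b \<le> f a"
    by (rule upper_abs_cont_on_nonincreasing[OF assms(1) _ assms(6)])
  then have "infdist (\<phi> b) K = 0"
    using assms(4) by (simp add: f_def mult_le_0_iff)
  then show ?thesis using in_closed_iff_infdist_zero[OF assms(3)] assms(4) by blast
qed

lemma solution_remains_in_closed:
  fixes \<phi> :: "real \<Rightarrow> 'a::euclidean_space"
  assumes "is_solution C F D \<phi>" "{a..b} \<subseteq> D" "a \<le> b" "closed K" "\<phi> a \<in> K" "k \<ge> 0"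
    and "\<And>t. t \<in> {a..b} \<Longrightarrow> \<phi> t \<notin> K \<Longrightarrow>
      \<exists>y\<in>Proj K (\<phi> t). \<forall>v\<in>F (\<phi> t). (\<phi> t - y) \<bullet> v \<le> k * (dist (\<phi> t) y)\<^sup>2"
  shows "\<phi> b \<in> K"
proof -
  obtain Z where "Z \<in> null_sets lebesgue" and dini: "\<And>t. t \<in> {a..<b} \<Longrightarrow> t \<notin> Z \<Longrightarrow>
      right_dini_le (\<lambda>s. (infdist (\<phi> s) K)\<^sup>2) t (2 * k * (infdist (\<phi> t) K)\<^sup>2)"
    using solution_infdist_sq_right_dini_le[OF assms(1,2,7)] by blast
  moreover have "abs_cont_on {a..b} \<phi>"
    using assms(1,2) unfolding is_solution_def loc_abs_cont_on_def by blast
  ultimately show ?thesis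
    using assms(3-6) by (intro infdist_sq_Gronwall[where L = "2 * k"]) auto
qed

lemma projection_inner_estimate:
  fixes C K :: "'a::euclidean_space set"
  assumes SA: "standing_assumption C F" and "closed K"
    and tangent: "\<forall>y\<in>frontier K \<inter> interior C. F y \<subseteq> contingent_cone K y"
    and "compact P" "P \<subseteq> C"
  obtains k where "k \<ge> 0" "\<And>z y v. z \<in> P \<Longrightarrow> z \<notin> K \<Longrightarrow> y \<in> Proj (frontier K) z \<Longrightarrow> y \<in> interior C \<Longrightarrow>
      v \<in> F z \<Longrightarrow> (z - y) \<bullet> v \<le> k * (dist z y)\<^sup>2"
proof (cases "P = {}")
  case False
  have "closed C" and "\<forall>z\<in>C. F z \<noteq> {}" and osl: "one_sided_loc_lipschitz F"
    using SA unfolding standing_assumption_def by auto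
  define Y where "Y = (\<Union>z\<in>P. Proj (frontier K) z) \<inter> interior C"
  define N where "N = P \<union> closure Y"
  have "bounded Y" unfolding Y_def
    using bounded_UN_Proj[OF compact_imp_bounded[OF \<open>compact P\<close>]] by (rule bounded_subset) blast
  then have "compact N" unfolding N_def using \<open>compact P\<close> by (simp add: compact_Un)
  moreover have "N \<subseteq> C"
    unfolding N_def Y_def using \<open>P \<subseteq> C\<close> closure_minimal[OF _ \<open>closed C\<close>] interior_subset by blast
  then have "N \<subseteq> sv_dom F" using \<open>\<forall>z\<in>C. F z \<noteq> {}\<close> unfolding sv_dom_def by blast
  moreover have "N \<noteq> {}" unfolding N_def using False by blast
  ultimately have "\<exists>k>0. \<forall>x1\<in>N. \<forall>x2\<in>N. (\<lambda>v. (x1 - x2) \<bullet> v) ` F x1 \<subseteq>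
      {a + b | a b. a \<in> (\<lambda>v. (x1 - x2) \<bullet> v) ` F x2 \<and> \<bar>b\<bar> \<le> k * (norm (x1 - x2))\<^sup>2}"
    using osl[unfolded one_sided_loc_lipschitz_def, rule_format, of N] by simp
  then obtain k where "k > 0" and lip: "\<forall>x1\<in>N. \<forall>x2\<in>N. (\<lambda>v. (x1 - x2) \<bullet> v) ` F x1 \<subseteq>
      {a + b | a b. a \<in> (\<lambda>v. (x1 - x2) \<bullet> v) ` F x2 \<and> \<bar>b\<bar> \<le> k * (norm (x1 - x2))\<^sup>2}"
    by (elim exE conjE)
  show ?thesis
  proof (rule that)
    fix z y v assume z: "z \<in> P" "z \<notin> K" and y: "y \<in> Proj (frontier K) z" "y \<in> interior C"
      and "v \<in> F z"
    have "y \<in> Y" unfolding Y_def using z y by blast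
    then have "y \<in> N" unfolding N_def by (simp add: closure_subset[THEN subsetD])
    moreover have "z \<in> N" unfolding N_def using z by blast
    ultimately have "(z - y) \<bullet> v \<in>
        {a + b | a b. a \<in> (\<lambda>v. (z - y) \<bullet> v) ` F y \<and> \<bar>b\<bar> \<le> k * (norm (z - y))\<^sup>2}"
      using lip \<open>v \<in> F z\<close> by blast
    then obtain w b where "w \<in> F y" and "(z - y) \<bullet> v = (z - y) \<bullet> w + b"
      and "\<bar>b\<bar> \<le> k * (norm (z - y))\<^sup>2"
      by blast
    moreover have "(z - y) \<bullet> w \<le> 0"
    proof (rule Proj_inner_contingent_cone_nonpos)
      show "y \<in> Proj K z" using Proj_frontier_subset_Proj[OF \<open>closed K\<close> z(2)] y(1) by blast
      show "w \<in> contingent_cone K y" using tangent y \<open>w \<in> F y\<close> unfolding Proj_def by blast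
    qed
    ultimately show "(z - y) \<bullet> v \<le> k * (dist z y)\<^sup>2" by (simp add: dist_norm)
  qed (use \<open>k > 0\<close> in simp)
qed (use that in blast)

lemma solution_on_Icc:
  assumes "is_solution C F D \<phi>" "T > 0" "{0<..T} \<subseteq> D"
  shows "{0..T} \<subseteq> D" "compact (\<phi> ` {0..T})" "\<phi> ` {0..T} \<subseteq> C"
proof -
  have "T \<in> D" using assms(2,3) by auto
  then have "0 \<in> D" using assms(1) unfolding is_solution_def solution_domain_def by auto
  then show "{0..T} \<subseteq> D" using assms(3) by (auto simp: less_eq_real_def)
  then have "abs_cont_on {0..T} \<phi>" and "\<phi> ` {0..T} \<subseteq> C"
    using assms(1) unfolding is_solution_def loc_abs_cont_on_def by blast+
  then show "compact (\<phi> ` {0..T})" "\<phi> ` {0..T} \<subseteq> C"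
    by (auto intro: compact_continuous_image abs_cont_on_imp_continuous_on)
qed

lemma stays_imp_not_leaves_immediately:
  assumes "T > 0" "\<phi> ` {0..T} \<subseteq> K"
  shows "\<not> leaves_immediately C K D \<phi>"
proof
  assume "leaves_immediately C K D \<phi>"
  then obtain T' where "T' > 0" "\<phi> ` {0<..T'} \<subseteq> C - K"
    unfolding leaves_immediately_def by blast
  moreover have "min T T' \<in> {0<..T'}" using assms(1) \<open>T' > 0\<close> by simp
  ultimately have "\<phi> (min T T') \<notin> K" by blast
  moreover have "\<phi> (min T T') \<in> K" using assms \<open>T' > 0\<close> by auto
  ultimately show False by contradiction
qed

theorem proposition2:
  fixes C K :: "'a::euclidean_space set" and F :: "'a \<Rightarrow> 'a set"
    and D :: "real set" and \<phi> :: "real \<Rightarrow> 'a" and x :: 'a and T :: real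
  assumes "closed K"
    and "standing_assumption C F"
    and "\<forall>y\<in>frontier K \<inter> interior C. F y \<subseteq> contingent_cone K y"
    and "is_solution C F D \<phi>"
    and "\<phi> 0 = x" and "x \<in> frontier K"
    and "star_property_with C K D \<phi> T"
  shows "\<phi> ` {0..T} \<subseteq> K \<and> \<not> leaves_immediately C K D \<phi>"
proof -
  have "\<phi> 0 \<in> K" using assms(1,5,6) frontier_subset_closed by blast
  have "T > 0" and "{0<..T} \<subseteq> D"
    and star: "\<And>t. t \<in> {0<..T} \<Longrightarrow> Proj (frontier K) (\<phi> t) \<inter> interior C \<noteq> {}"
    using assms(7) unfolding star_property_with_def by auto
  note solution = solution_on_Icc[OF assms(4) \<open>T > 0\<close> \<open>{0<..T} \<subseteq> D\<close>]
  obtain k where "k \<ge> 0" and k: "\<And>z y v. z \<in> \<phi> ` {0..T} \<Longrightarrow> z \<notin> K \<Longrightarrow>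
      y \<in> Proj (frontier K) z \<Longrightarrow> y \<in> interior C \<Longrightarrow> v \<in> F z \<Longrightarrow> (z - y) \<bullet> v \<le> k * (dist z y)\<^sup>2"
    using projection_inner_estimate[OF assms(2,1,3) solution(2,3)] by blast
  have near: "\<exists>y\<in>Proj K (\<phi> t). \<forall>v\<in>F (\<phi> t). (\<phi> t - y) \<bullet> v \<le> k * (dist (\<phi> t) y)\<^sup>2"
    if "t \<in> {0..T}" "\<phi> t \<notin> K" for t
  proof -
    have "t \<in> {0<..T}" using that \<open>\<phi> 0 \<in> K\<close> by (cases "t = 0") auto
    then obtain y where "y \<in> Proj (frontier K) (\<phi> t)" "y \<in> interior C" using star by blast
    then show ?thesis
      using k[of "\<phi> t" y] that Proj_frontier_subset_Proj[OF assms(1) that(2)] by blast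
  qed
  have "\<phi> b \<in> K" if "b \<in> {0..T}" for b
    by (rule solution_remains_in_closed[OF assms(4) _ _ assms(1) \<open>\<phi> 0 \<in> K\<close> \<open>k \<ge> 0\<close>])
      (use that solution(1) near in auto)
  then have "\<phi> ` {0..T} \<subseteq> K" by blast
  with \<open>T > 0\<close> show ?thesis by (simp add: stays_imp_not_leaves_immediately)
qed

end
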